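(* Let $(S,T,\alpha,\beta)$ be a matched product system of left inverse semi-braces such that the maps $r_S$ and $r_T$ associated to $S$ and $T$ are solutions. Then the map $r_{S\bowtie T}$ associated to the matched product $S\bowtie T$ is a solution, and it coincides with the matched product of solutions $r_S\bowtie r_T$, i.e. for all $(a,u),(b,v)\in S\times T$, $$r_{S\bowtie T}((a,u),(b,v))=\left(\left(\alpha_u\lambda_{\bar a}(b),\,\beta_a\lambda_{\bar u}(v)\right),\ \left(\alpha^{-1}_{\overline U}\rho_{\alpha_{\bar u}(b)}(a),\ \beta^{-1}_{\overline A}\rho_{\beta_{\bar a}(v)}(u)\right)\right),$$ where $\bar a=\alpha_u^{-1}(a)$, $\bar u=\beta_a^{-1}(u)$, $A=\alpha_u\lambda_{\bar a}(b)$, $U=\beta_a\lambda_{\bar u}(v)$, $\overline A=\alpha_U^{-1}(A)$, $\overline U=\beta_A^{-1}(U)$.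
   Context: An inverse semigroup is a semigroup $(S,\cdot)$ in which for each $a$ there is a unique $a^{-1}$ with $aa^{-1}a=a$, $a^{-1}aa^{-1}=a^{-1}$. A left inverse semi-brace is a triple $(S,+,\cdot)$ with $(S,+)$ a semigroup, $(S,\cdot)$ an inverse semigroup and $a(b+c)=ab+a(a^{-1}+c)$ for all $a,b,c$. In it set $\lambda_a(b)=a(a^{-1}+b)$, $\rho_b(a)=(a^{-1}+b)^{-1}b$; the map associated to $S$ is $r_S(a,b)=(\lambda_a(b),\rho_b(a))$. A solution is a map $r:X\times X\to X\times X$ with $(r\times\mathrm{id})(\mathrm{id}\times r)(r\times\mathrm{id})=(\mathrm{id}\times r)(r\times\mathrm{id})(\mathrm{id}\times r)$. A matched product system of left inverse semi-braces is a quadruple $(S,T,\alpha,\beta)$ where $S,T$ are left inverse semi-braces, $\alpha:T\to\mathrm{Aut}(S,+)$ is a homomorphism of inverse semigroups from $(T,\cdot)$ into the automorphism group of $(S,+)$, $\beta:S\to\mathrm{Aut}(T,+)$ is a homomorphism of inverse semigroups from $(S,\cdot)$ into the automorphism group of $(T,+)$ (write $\alpha_u=\alpha(u)$, $\beta_a=\beta(a)$, and $\alpha_u^{-1},\beta_a^{-1}$ for the inverse maps), such that for all $a,b\in S$, $u,v\in T$: $\alpha_u(\alpha_u^{-1}(a)\,b)=a\,\alpha_{\beta_a^{-1}(u)}(b)$ and $\beta_a(\beta_a^{-1}(u)\,v)=u\,\beta_{\alpha_u^{-1}(a)}(v)$; and if $\alpha_u(\alpha_u^{-1}(a)\,a)=a$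 and $\beta_a(\beta_a^{-1}(u)\,u)=u$, then $\alpha_u(a)=a$ and $\beta_a(u)=u$. The matched product $S\bowtie T$ is $S\times T$ with $(a,u)+(b,v)=(a+b,u+v)$ and $(a,u)(b,v)=(\alpha_u(\alpha_u^{-1}(a)b),\beta_a(\beta_a^{-1}(u)v))$; it is a left inverse semi-brace, and $r_{S\bowtie T}$ denotes its associated map. *)

theory Defs
  imports Main
begin

definition is_semigroup :: "('a \<Rightarrow> 'a \<Rightarrow> 'a) \<Rightarrow> bool" where
  "is_semigroup f \<longleftrightarrow> (\<forall>a b c. f (f a b) c = f a (f b c))"

definition is_inv_of :: "('a \<Rightarrow> 'a \<Rightarrow> 'a) \<Rightarrow> 'a \<Rightarrow> 'a \<Rightarrow> bool" where
  "is_inv_of mult a b \<longleftrightarrow> mult (mult a b) a = a \<and> mult (mult b a) b = b"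

definition inverse_semigroup :: "('a \<Rightarrow> 'a \<Rightarrow> 'a) \<Rightarrow> bool" where
  "inverse_semigroup mult \<longleftrightarrow> is_semigroup mult \<and> (\<forall>a. \<exists>!b. is_inv_of mult a b)"

definition sinv :: "('a \<Rightarrow> 'a \<Rightarrow> 'a) \<Rightarrow> 'a \<Rightarrow> 'a" where
  "sinv mult a = (THE b. is_inv_of mult a b)"

definition left_inverse_semi_brace :: "('a \<Rightarrow> 'a \<Rightarrow> 'a) \<Rightarrow> ('a \<Rightarrow> 'a \<Rightarrow> 'a) \<Rightarrow> bool" where
  "left_inverse_semi_brace add mult \<longleftrightarrow> is_semigroup add \<and> inverse_semigroup mult \<and>
     (\<forall>a b c. mult a (add b c) = add (mult a b) (mult a (add (sinv mult a) c)))"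

definition lam :: "('a \<Rightarrow> 'a \<Rightarrow> 'a) \<Rightarrow> ('a \<Rightarrow> 'a \<Rightarrow> 'a) \<Rightarrow> 'a \<Rightarrow> 'a \<Rightarrow> 'a" where
  "lam add mult a b = mult a (add (sinv mult a) b)"

definition rho :: "('a \<Rightarrow> 'a \<Rightarrow> 'a) \<Rightarrow> ('a \<Rightarrow> 'a \<Rightarrow> 'a) \<Rightarrow> 'a \<Rightarrow> 'a \<Rightarrow> 'a" where
  "rho add mult b a = mult (sinv mult (add (sinv mult a) b)) b"

definition assoc_map :: "('a \<Rightarrow> 'a \<Rightarrow> 'a) \<Rightarrow> ('a \<Rightarrow> 'a \<Rightarrow> 'a) \<Rightarrow> 'a \<times> 'a \<Rightarrow> 'a \<times> 'a" where
  "assoc_map add mult = (\<lambda>(a, b). (lam add mult a b, rho add mult b a))"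

definition r12 :: "('a \<times> 'a \<Rightarrow> 'a \<times> 'a) \<Rightarrow> 'a \<times> 'a \<times> 'a \<Rightarrow> 'a \<times> 'a \<times> 'a" where
  "r12 r = (\<lambda>(x, y, z). (fst (r (x, y)), snd (r (x, y)), z))"

definition r23 :: "('a \<times> 'a \<Rightarrow> 'a \<times> 'a) \<Rightarrow> 'a \<times> 'a \<times> 'a \<Rightarrow> 'a \<times> 'a \<times> 'a" where
  "r23 r = (\<lambda>(x, y, z). (x, fst (r (y, z)), snd (r (y, z))))"

definition is_solution :: "('a \<times> 'a \<Rightarrow> 'a \<times> 'a) \<Rightarrow> bool" where
  "is_solution r \<longleftrightarrow> r12 r \<circ> r23 r \<circ> r12 r = r23 r \<circ> r12 r \<circ> r23 r"

definition is_add_aut :: "('a \<Rightarrow> 'a \<Rightarrow> 'a) \<Rightarrow> ('a \<Rightarrow> 'a) \<Rightarrow> bool" where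
  "is_add_aut add f \<longleftrightarrow> bij f \<and> (\<forall>a b. f (add a b) = add (f a) (f b))"

definition hom_to_aut :: "('b \<Rightarrow> 'b \<Rightarrow> 'b) \<Rightarrow> ('a \<Rightarrow> 'a \<Rightarrow> 'a) \<Rightarrow> ('b \<Rightarrow> 'a \<Rightarrow> 'a) \<Rightarrow> bool" where
  "hom_to_aut multT addS \<alpha> \<longleftrightarrow> (\<forall>u. is_add_aut addS (\<alpha> u)) \<and>
     (\<forall>u v. \<alpha> (multT u v) = \<alpha> u \<circ> \<alpha> v)"

definition matched_product_system ::
  "('a \<Rightarrow> 'a \<Rightarrow> 'a) \<Rightarrow> ('a \<Rightarrow> 'a \<Rightarrow> 'a) \<Rightarrow> ('b \<Rightarrow> 'b \<Rightarrow> 'b) \<Rightarrow> ('b \<Rightarrow> 'b \<Rightarrow> 'b)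
   \<Rightarrow> ('b \<Rightarrow> 'a \<Rightarrow> 'a) \<Rightarrow> ('a \<Rightarrow> 'b \<Rightarrow> 'b) \<Rightarrow> bool" where
  "matched_product_system addS multS addT multT \<alpha> \<beta> \<longleftrightarrow>
     left_inverse_semi_brace addS multS \<and> left_inverse_semi_brace addT multT \<and>
     hom_to_aut multT addS \<alpha> \<and> hom_to_aut multS addT \<beta> \<and>
     (\<forall>a b u. \<alpha> u (multS (inv (\<alpha> u) a) b) = multS a (\<alpha> (inv (\<beta> a) u) b)) \<and>
     (\<forall>a u v. \<beta> a (multT (inv (\<beta> a) u) v) = multT u (\<beta> (inv (\<alpha> u) a) v)) \<and>
     (\<forall>a u. \<alpha> u (multS (inv (\<alpha> u) a) a) = a \<and> \<beta> a (multT (inv (\<beta> a) u) u) = u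
        \<longrightarrow> \<alpha> u a = a \<and> \<beta> a u = u)"

definition mp_add :: "('a \<Rightarrow> 'a \<Rightarrow> 'a) \<Rightarrow> ('b \<Rightarrow> 'b \<Rightarrow> 'b) \<Rightarrow> 'a \<times> 'b \<Rightarrow> 'a \<times> 'b \<Rightarrow> 'a \<times> 'b" where
  "mp_add addS addT = (\<lambda>(a, u) (b, v). (addS a b, addT u v))"

definition mp_mult :: "('a \<Rightarrow> 'a \<Rightarrow> 'a) \<Rightarrow> ('b \<Rightarrow> 'b \<Rightarrow> 'b) \<Rightarrow> ('b \<Rightarrow> 'a \<Rightarrow> 'a) \<Rightarrow> ('a \<Rightarrow> 'b \<Rightarrow> 'b)
   \<Rightarrow> 'a \<times> 'b \<Rightarrow> 'a \<times> 'b \<Rightarrow> 'a \<times> 'b" where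
  "mp_mult multS multT \<alpha> \<beta> = (\<lambda>(a, u) (b, v).
     (\<alpha> u (multS (inv (\<alpha> u) a) b), \<beta> a (multT (inv (\<beta> a) u) v)))"

end

theory Submission
  imports Defs
begin

(*
  For X = (a, u) write a' = alpha_u^-1(a) and u' = beta_a^-1(u). The matched product S x T is an
  inverse semigroup with fst (X Y) = a * alpha_u'(b) and X^-1 = (a'^-1, u'^-1); computing lambda
  and rho in it componentwise gives the formula for r_{S x T}.
  For the braid relation, send a triple (X, Y, Z) to the S-factors (a, alpha_u'(b), alpha_(XY)'(c))
  of the partial products fst X, fst (X Y), fst (X Y Z). This map turns each leg of the braid
  relation of r_{S x T} into the corresponding leg for r_S, and by the symmetry S <-> T its
  T-analogue does the same with r_T. Together the two maps are injective, so the braid relations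
  of r_S and r_T lift to r_{S x T}.
*)

section \<open>Inverse semigroups\<close>

locale inv_semigroup =
  fixes mult :: "'a \<Rightarrow> 'a \<Rightarrow> 'a" (infixl "\<cdot>" 70)
  assumes inverse_semigroup: "inverse_semigroup mult"
begin

abbreviation iv :: "'a \<Rightarrow> 'a" where "iv \<equiv> sinv mult"

lemma assoc: "a \<cdot> b \<cdot> c = a \<cdot> (b \<cdot> c)"
  using inverse_semigroup unfolding inverse_semigroup_def is_semigroup_def by blast

lemma is_inv_of_sinv: "is_inv_of mult a (iv a)"
proof -
  have "\<exists>!b. is_inv_of mult a b"
    using inverse_semigroup unfolding inverse_semigroup_def by blast
  then show ?thesis unfolding sinv_def by (rule theI')
qed

lemma mult_sinv_mult: "a \<cdot> iv a \<cdot> a = a"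
  and sinv_mult_sinv: "iv a \<cdot> a \<cdot> iv a = iv a"
  using is_inv_of_sinv unfolding is_inv_of_def by blast+

lemma sinv_eqI:
  assumes "a \<cdot> b \<cdot> a = a" and "b \<cdot> a \<cdot> b = b"
  shows "iv a = b"
proof -
  have "\<exists>!b. is_inv_of mult a b"
    using inverse_semigroup unfolding inverse_semigroup_def by blast
  moreover have "is_inv_of mult a b" using assms unfolding is_inv_of_def ..
  ultimately show ?thesis unfolding sinv_def by (rule the1_equality)
qed

lemma sinv_sinv: "iv (iv a) = a"
  by (rule sinv_eqI) (simp_all flip: assoc add: mult_sinv_mult sinv_mult_sinv)

lemma sinv_idem: "e \<cdot> e = e \<Longrightarrow> iv e = e"
  by (rule sinv_eqI) simp_all

lemma idem_sinv_mult: "(iv a \<cdot> a) \<cdot> (iv a \<cdot> a) = iv a \<cdot> a"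
  by (metis assoc mult_sinv_mult)

lemma idem_mult:
  assumes e: "e \<cdot> e = e" and f: "f \<cdot> f = f"
  shows "(e \<cdot> f) \<cdot> (e \<cdot> f) = e \<cdot> f"
proof -
  define x where "x = iv (e \<cdot> f)"
  have x1: "(e \<cdot> f) \<cdot> x \<cdot> (e \<cdot> f) = e \<cdot> f" and x2: "x \<cdot> (e \<cdot> f) \<cdot> x = x"
    unfolding x_def by (rule mult_sinv_mult, rule sinv_mult_sinv)
  have "iv (e \<cdot> f) = f \<cdot> x \<cdot> e"
  proof (rule sinv_eqI)
    have "(e \<cdot> f) \<cdot> (f \<cdot> x \<cdot> e) \<cdot> (e \<cdot> f) = e \<cdot> (f \<cdot> f) \<cdot> x \<cdot> (e \<cdot> e) \<cdot> f"
      by (simp add: assoc)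
    also have "\<dots> = e \<cdot> f" using e f x1 by (simp add: assoc)
    finally show "(e \<cdot> f) \<cdot> (f \<cdot> x \<cdot> e) \<cdot> (e \<cdot> f) = e \<cdot> f" .
    have "(f \<cdot> x \<cdot> e) \<cdot> (e \<cdot> f) \<cdot> (f \<cdot> x \<cdot> e) = f \<cdot> (x \<cdot> (e \<cdot> e) \<cdot> (f \<cdot> f) \<cdot> x) \<cdot> e"
      by (simp add: assoc)
    also have "\<dots> = f \<cdot> x \<cdot> e" using e f x2 by (simp add: assoc)
    finally show "(f \<cdot> x \<cdot> e) \<cdot> (e \<cdot> f) \<cdot> (f \<cdot> x \<cdot> e) = f \<cdot> x \<cdot> e" .
  qed
  then have xe: "x = f \<cdot> x \<cdot> e" unfolding x_def .
  have "x \<cdot> x = f \<cdot> (x \<cdot> (e \<cdot> f) \<cdot> x) \<cdot> e"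
    by (subst (1) xe, subst (2) xe) (simp add: assoc)
  also have "\<dots> = x" using x2 xe by simp
  finally have "x \<cdot> x = x" .
  moreover from this have "e \<cdot> f = x"
    unfolding x_def by (metis sinv_idem sinv_sinv)
  ultimately show ?thesis by simp
qed

lemma idem_commute:
  assumes e: "e \<cdot> e = e" and f: "f \<cdot> f = f"
  shows "e \<cdot> f = f \<cdot> e"
proof -
  have "iv (e \<cdot> f) = f \<cdot> e"
  proof (rule sinv_eqI)
    have "(e \<cdot> f) \<cdot> (f \<cdot> e) \<cdot> (e \<cdot> f) = (e \<cdot> f) \<cdot> (e \<cdot> f)"
      using e f by (simp add: assoc) (metis assoc)
    then show "(e \<cdot> f) \<cdot> (f \<cdot> e) \<cdot> (e \<cdot> f) = e \<cdot> f"
      using idem_mult[OF e f] by simp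
    have "(f \<cdot> e) \<cdot> (e \<cdot> f) \<cdot> (f \<cdot> e) = (f \<cdot> e) \<cdot> (f \<cdot> e)"
      using e f by (simp add: assoc) (metis assoc)
    then show "(f \<cdot> e) \<cdot> (e \<cdot> f) \<cdot> (f \<cdot> e) = f \<cdot> e"
      using idem_mult[OF f e] by simp
  qed
  moreover have "iv (e \<cdot> f) = e \<cdot> f"
    using idem_mult[OF e f] by (rule sinv_idem)
  ultimately show ?thesis by simp
qed

end

lemma (in semigroup) inverse_semigroupI:
  assumes inv: "\<And>a. is_inv_of f a (j a)"
    and idem_comm: "\<And>e e'. e \<^bold>* e = e \<Longrightarrow> e' \<^bold>* e' = e' \<Longrightarrow> e \<^bold>* e' = e' \<^bold>* e"
  shows "inverse_semigroup f"
proof -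
  have idem: "(x \<^bold>* y) \<^bold>* (x \<^bold>* y) = x \<^bold>* y" if "is_inv_of f x y" for x y
    using that unfolding is_inv_of_def by (metis assoc)
  have unique: "b = j a" if b: "is_inv_of f a b" for a b
  proof -
    let ?z = "j a"
    have z: "is_inv_of f a ?z" and z': "is_inv_of f ?z a"
      using inv[of a] unfolding is_inv_of_def by auto
    from b have b': "is_inv_of f b a" unfolding is_inv_of_def by auto
    have "b = b \<^bold>* (a \<^bold>* ?z \<^bold>* a) \<^bold>* b"
      using b z unfolding is_inv_of_def by simp
    also have "\<dots> = (?z \<^bold>* a) \<^bold>* (b \<^bold>* a) \<^bold>* b"
      using idem_comm[OF idem[OF b'] idem[OF z']] by (simp add: assoc)
    also have "\<dots> = ?z \<^bold>* a \<^bold>* b"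
      using b unfolding is_inv_of_def by (simp add: assoc)
    finally have b_eq: "b = ?z \<^bold>* a \<^bold>* b" .
    have "?z = ?z \<^bold>* (a \<^bold>* b \<^bold>* a) \<^bold>* ?z"
      using b z unfolding is_inv_of_def by simp
    also have "\<dots> = ?z \<^bold>* (a \<^bold>* ?z) \<^bold>* (a \<^bold>* b)"
      using idem_comm[OF idem[OF b] idem[OF z]] by (simp add: assoc)
    also have "\<dots> = ?z \<^bold>* a \<^bold>* b"
      using z unfolding is_inv_of_def by (simp add: assoc)
    finally show ?thesis using b_eq by simp
  qed
  have "\<exists>!b. is_inv_of f a b" for a
    using inv unique by blast
  then show ?thesis
    unfolding inverse_semigroup_def is_semigroup_def by (simp add: assoc)
qed

lemma hom_into_bij_sinv:
  assumes "inverse_semigroup m" and bij: "\<And>u. bij (h u)" and hom: "\<And>u v. h (m u v) = h u \<circ> h v"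
  shows "h (sinv m u) = inv (h u)"
proof -
  interpret inv_semigroup m by unfold_locales fact
  have "h u (h (iv u) (h u x)) = h u x" for x
    using hom mult_sinv_mult by (metis comp_apply)
  then have cancel: "h (iv u) (h u x) = x" for x
    using bij[of u] by (meson bij_def injD)
  show ?thesis
  proof
    fix y
    obtain x where "y = h u x" using bij[of u] by (metis bij_def surj_def)
    then show "h (iv u) y = inv (h u) y" using cancel bij[of u] by (simp add: bij_def inv_f_f)
  qed
qed

lemma hom_into_bij_idem:
  assumes bij: "\<And>u. bij (h u)" and hom: "\<And>u v. h (m u v) = h u \<circ> h v" and "m e e = e"
  shows "h e = id"
proof
  fix x
  have "h e (h e x) = h e x" using hom[of e e] \<open>m e e = e\<close> by (metis comp_apply)
  then show "h e x = id x" using bij[of e] by (simp add: bij_def inj_eq)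
qed

section \<open>Matched product systems\<close>

lemma matched_product_system_swap:
  "matched_product_system addS multS addT multT \<alpha> \<beta> \<Longrightarrow>
   matched_product_system addT multT addS multS \<beta> \<alpha>"
  unfolding matched_product_system_def by blast

locale matched_system =
  fixes addS multS :: "'a \<Rightarrow> 'a \<Rightarrow> 'a" and addT multT :: "'b \<Rightarrow> 'b \<Rightarrow> 'b"
    and \<alpha> :: "'b \<Rightarrow> 'a \<Rightarrow> 'a" and \<beta> :: "'a \<Rightarrow> 'b \<Rightarrow> 'b"
  assumes matched_product_system: "matched_product_system addS multS addT multT \<alpha> \<beta>"
begin

lemma brace_S: "left_inverse_semi_brace addS multS"
  and brace_T: "left_inverse_semi_brace addT multT"
  and alpha_hom: "hom_to_aut multT addS \<alpha>"
  and beta_hom: "hom_to_aut multS addT \<beta>"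
  and alpha_mult_compat: "\<And>a b u. \<alpha> u (multS (inv (\<alpha> u) a) b) = multS a (\<alpha> (inv (\<beta> a) u) b)"
  and beta_mult_compat: "\<And>a u v. \<beta> a (multT (inv (\<beta> a) u) v) = multT u (\<beta> (inv (\<alpha> u) a) v)"
  and fixed_point_compat: "\<And>a u. \<alpha> u (multS (inv (\<alpha> u) a) a) = a \<Longrightarrow>
      \<beta> a (multT (inv (\<beta> a) u) u) = u \<Longrightarrow> \<alpha> u a = a \<and> \<beta> a u = u"
  using matched_product_system unfolding matched_product_system_def by blast+

sublocale S: inv_semigroup multS
  using brace_S unfolding left_inverse_semi_brace_def by unfold_locales blast
sublocale T: inv_semigroup multT
  using brace_T unfolding left_inverse_semi_brace_def by unfold_locales blast

lemma alpha_bij: "bij (\<alpha> u)"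
  and alpha_add: "\<alpha> u (addS x y) = addS (\<alpha> u x) (\<alpha> u y)"
  and alpha_mult: "\<alpha> (multT u v) = \<alpha> u \<circ> \<alpha> v"
  using alpha_hom unfolding hom_to_aut_def is_add_aut_def by blast+

lemma beta_bij: "bij (\<beta> a)"
  and beta_mult: "\<beta> (multS a b) = \<beta> a \<circ> \<beta> b"
  using beta_hom unfolding hom_to_aut_def is_add_aut_def by blast+

lemma alpha_inv_apply [simp]: "\<alpha> u (inv (\<alpha> u) x) = x"
  and inv_alpha_apply [simp]: "inv (\<alpha> u) (\<alpha> u x) = x"
  and beta_inv_apply [simp]: "\<beta> a (inv (\<beta> a) y) = y"
  and inv_beta_apply [simp]: "inv (\<beta> a) (\<beta> a y) = y"
  using alpha_bij beta_bij by (simp_all add: bij_def surj_f_inv_f inv_f_f)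

lemma inv_inv_alpha [simp]: "inv (inv (\<alpha> u)) = \<alpha> u"
  and inv_inv_beta [simp]: "inv (inv (\<beta> a)) = \<beta> a"
  using alpha_bij beta_bij by (simp_all add: inv_inv_eq)

lemma alpha_eq_iff: "\<alpha> u x = \<alpha> u y \<longleftrightarrow> x = y"
  and beta_eq_iff: "\<beta> a v = \<beta> a w \<longleftrightarrow> v = w"
  using alpha_bij beta_bij by (simp_all add: bij_def inj_eq)

lemma alpha_sinv: "\<alpha> (sinv multT u) = inv (\<alpha> u)"
  by (rule hom_into_bij_sinv[OF T.inverse_semigroup alpha_bij alpha_mult])

lemma beta_sinv: "\<beta> (sinv multS a) = inv (\<beta> a)"
  by (rule hom_into_bij_sinv[OF S.inverse_semigroup beta_bij beta_mult])

lemma alpha_idem: "multT f f = f \<Longrightarrow> \<alpha> f = id"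
  by (rule hom_into_bij_idem[OF alpha_bij alpha_mult])

lemma beta_idem: "multS e e = e \<Longrightarrow> \<beta> e = id"
  by (rule hom_into_bij_idem[OF beta_bij beta_mult])

lemma inv_beta_mult_apply: "inv (\<beta> (multS a b)) v = inv (\<beta> b) (inv (\<beta> a) v)"
  by (simp add: beta_mult o_inv_distrib beta_bij)

(* The u' = beta_a^-1(u) of the pair (a, u) = (alpha_w(x), w), whose a' is x. *)
abbreviation twist :: "'b \<Rightarrow> 'a \<Rightarrow> 'b" where
  "twist w x \<equiv> inv (\<beta> (\<alpha> w x)) w"

lemma alpha_mult_right:
  "\<alpha> w (multS x b) = multS (\<alpha> w x) (\<alpha> (twist w x) b)"
  using alpha_mult_compat[of w "\<alpha> w x" b] by simp

lemma alpha_twisted_sinv: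
  "\<alpha> (twist w x) (sinv multS x) = sinv multS (\<alpha> w x)"
proof -
  define a where "a = \<alpha> w x"
  define w' where "w' = twist w x"
  define y where "y = inv (\<alpha> w') (sinv multS a)"
  have alpha_x: "\<alpha> w (multS x b) = multS a (\<alpha> w' b)" for b
    unfolding a_def w'_def by (rule alpha_mult_right)
  have alpha_y: "\<alpha> w' (multS y b) = multS (sinv multS a) (\<alpha> w b)" for b
    using alpha_mult_compat[of w' "sinv multS a" b] unfolding y_def w'_def a_def by (simp add: beta_sinv)
  have alpha_w_x: "\<alpha> w x = a" and alpha_w'_y: "\<alpha> w' y = sinv multS a"
    unfolding a_def y_def by simp_all
  have "\<alpha> w (multS (multS x y) x) = \<alpha> w x"
    by (simp add: S.assoc alpha_x alpha_y alpha_w_x) (metis S.assoc S.mult_sinv_mult)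
  then have xyx: "multS (multS x y) x = x" by (simp add: alpha_eq_iff)
  have "\<alpha> w' (multS (multS y x) y) = \<alpha> w' y"
    by (simp add: S.assoc alpha_x alpha_y alpha_w'_y) (metis S.assoc S.sinv_mult_sinv)
  then have yxy: "multS (multS y x) y = y" by (simp add: alpha_eq_iff)
  from xyx yxy have "sinv multS x = y" by (rule S.sinv_eqI)
  then show ?thesis by (simp add: y_def w'_def a_def)
qed

lemma alpha_preserves_idem:
  assumes "multS e e = e"
  shows "multS (\<alpha> w e) (\<alpha> w e) = \<alpha> w e"
proof -
  have "\<alpha> w e = \<alpha> w (multS e e)" using assms by simp
  also have "\<dots> = multS (\<alpha> w e) (sinv multS (\<alpha> w e))"
    using alpha_twisted_sinv[of w e] by (simp add: alpha_mult_right S.sinv_idem[OF assms])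
  finally have "multS (\<alpha> w e) (\<alpha> w e)
      = multS (multS (\<alpha> w e) (sinv multS (\<alpha> w e))) (\<alpha> w e)"
    by simp
  then show ?thesis by (simp add: S.mult_sinv_mult)
qed

lemma alpha_lam:
  "\<alpha> w (lam addS multS b x) = lam addS multS (\<alpha> w b) (\<alpha> (twist w b) x)"
  unfolding lam_def by (simp add: alpha_mult_right alpha_add alpha_twisted_sinv)

lemma sinv_alpha_mult:
  "multS (sinv multS (\<alpha> w p)) (\<alpha> w b) = \<alpha> (twist w p) (multS (sinv multS p) b)"
proof -
  define w' where "w' = twist w p"
  have "\<alpha> w' (multS (sinv multS p) b)
      = multS (sinv multS (\<alpha> w p)) (\<alpha> (inv (\<beta> (sinv multS (\<alpha> w p))) w') b)"
    using alpha_mult_right[of w' "sinv multS p" b] alpha_twisted_sinv[of w p]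
    unfolding w'_def by simp
  also have "inv (\<beta> (sinv multS (\<alpha> w p))) w' = w"
    unfolding w'_def by (simp add: beta_sinv)
  finally show ?thesis unfolding w'_def by simp
qed

lemma rho_alpha:
  "rho addS multS (\<alpha> (twist w b) c) (\<alpha> w b)
   = \<alpha> (twist w (lam addS multS b c)) (rho addS multS c b)"
proof -
  define w' where "w' = twist w b"
  define p where "p = addS (sinv multS b) c"
  have "rho addS multS (\<alpha> w' c) (\<alpha> w b) = multS (sinv multS (\<alpha> w' p)) (\<alpha> w' c)"
    unfolding rho_def p_def w'_def by (simp add: alpha_add alpha_twisted_sinv)
  also have "\<dots> = \<alpha> (twist w' p) (rho addS multS c b)"
    unfolding sinv_alpha_mult rho_def p_def ..
  also have "twist w' p = twist w (lam addS multS b c)"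
    unfolding lam_def alpha_mult_right p_def[symmetric] w'_def[symmetric] inv_beta_mult_apply by simp
  finally show ?thesis unfolding w'_def .
qed

section \<open>The matched product\<close>

definition ubar :: "'a \<times> 'b \<Rightarrow> 'b" where
  "ubar X = inv (\<beta> (fst X)) (snd X)"

abbreviation pmult :: "'a \<times> 'b \<Rightarrow> 'a \<times> 'b \<Rightarrow> 'a \<times> 'b" where
  "pmult \<equiv> mp_mult multS multT \<alpha> \<beta>"

lemma pmult_Pair:
  "pmult (a, u) (b, v) = (\<alpha> u (multS (inv (\<alpha> u) a) b), \<beta> a (multT (inv (\<beta> a) u) v))"
  unfolding mp_mult_def by simp

lemma fst_pmult: "fst (pmult X Y) = multS (fst X) (\<alpha> (ubar X) (fst Y))"
  by (cases X; cases Y) (simp add: pmult_Pair alpha_mult_compat ubar_def)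

lemma ubar_pmult: "ubar (pmult X Y) = multT (twist (ubar X) (fst Y)) (ubar Y)"
proof -
  obtain a u b v where X: "X = (a, u)" and Y: "Y = (b, v)" by (cases X; cases Y)
  define q where "q = \<alpha> (ubar X) b"
  have "\<beta> q (multT (inv (\<beta> q) (ubar X)) (ubar Y))
      = multT (ubar X) (\<beta> (inv (\<alpha> (ubar X)) q) (ubar Y))"
    by (rule beta_mult_compat)
  also have "\<dots> = multT (ubar X) v" unfolding q_def by (simp add: Y ubar_def)
  finally have "inv (\<beta> q) (multT (ubar X) v) = multT (inv (\<beta> q) (ubar X)) (ubar Y)"
    by (metis inv_beta_apply)
  moreover have "pmult X Y = (multS a q, \<beta> a (multT (ubar X) v))"
    using fst_pmult[of X Y] by (simp add: X Y q_def ubar_def pmult_Pair)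
  ultimately show ?thesis
    by (simp add: ubar_def inv_beta_mult_apply Y q_def)
qed

lemma alpha_ubar_pmult:
  "\<alpha> (ubar (pmult X Y)) = \<alpha> (twist (ubar X) (fst Y)) \<circ> \<alpha> (ubar Y)"
  by (simp add: ubar_pmult alpha_mult)

lemma fst_pmult_assoc: "fst (pmult (pmult X Y) Z) = fst (pmult X (pmult Y Z))"
  by (simp add: fst_pmult alpha_ubar_pmult alpha_mult_right S.assoc)

end

sublocale matched_system \<subseteq> dual: matched_system addT multT addS multS \<beta> \<alpha>
  using matched_product_system by unfold_locales (rule matched_product_system_swap)

context matched_system
begin


definition abar :: "'a \<times> 'b \<Rightarrow> 'a" where
  "abar X = inv (\<alpha> (snd X)) (fst X)"

lemma dual_ubar_swap: "dual.ubar (prod.swap X) = abar X"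
  unfolding dual.ubar_def abar_def by simp

lemma pmult_swap: "dual.pmult (prod.swap X) (prod.swap Y) = prod.swap (pmult X Y)"
  by (cases X; cases Y) (simp add: mp_mult_def)

lemma snd_pmult: "snd (pmult X Y) = multT (snd X) (\<beta> (abar X) (snd Y))"
  using dual.fst_pmult[of "prod.swap X" "prod.swap Y"] by (simp add: pmult_swap dual_ubar_swap)

lemma pmult_assoc: "pmult (pmult X Y) Z = pmult X (pmult Y Z)"
  using fst_pmult_assoc dual.fst_pmult_assoc[of "prod.swap X" "prod.swap Y" "prod.swap Z"]
  by (simp add: pmult_swap prod_eq_iff)

lemma pmult_idem_Pair:
  assumes "multS e e = e" and "multT f f = f"
  shows "pmult (e, f) Y = (multS e (fst Y), multT f (snd Y))"
  using assms by (cases Y) (simp add: pmult_Pair alpha_idem beta_idem)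

lemma idem_pmultD:
  assumes "pmult E E = E"
  shows "multS (fst E) (fst E) = fst E" and "multT (snd E) (snd E) = snd E"
proof -
  obtain e f where E: "E = (e, f)" by (cases E)
  have "\<alpha> f (multS (inv (\<alpha> f) e) e) = e" and "\<beta> e (multT (inv (\<beta> e) f) f) = f"
    using assms by (simp_all add: E pmult_Pair)
  then have fix_e: "\<alpha> f e = e" and fix_f: "\<beta> e f = f"
    using fixed_point_compat by blast+
  then have "inv (\<alpha> f) e = e" and "inv (\<beta> e) f = f"
    by (metis inv_alpha_apply, metis inv_beta_apply)
  with assms have "\<alpha> f (multS e e) = \<alpha> f e" and "\<beta> e (multT f f) = \<beta> e f"
    by (simp_all add: E pmult_Pair fix_e fix_f)
  then show "multS (fst E) (fst E) = fst E" and "multT (snd E) (snd E) = snd E"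
    by (simp_all add: E alpha_eq_iff beta_eq_iff)
qed

lemma pmult_idem_commute:
  assumes "pmult E E = E" and "pmult F F = F"
  shows "pmult E F = pmult F E"
proof -
  obtain e f e' f' where E: "E = (e, f)" and F: "F = (e', f')" by (cases E; cases F)
  show ?thesis
    using idem_pmultD[OF assms(1)] idem_pmultD[OF assms(2)]
    by (simp add: E F pmult_idem_Pair S.idem_commute T.idem_commute)
qed

definition pinv :: "'a \<times> 'b \<Rightarrow> 'a \<times> 'b" where
  "pinv X = (sinv multS (abar X), sinv multT (ubar X))"

lemma ubar_pinv: "ubar (pinv X) = sinv multT (snd X)"
  using dual.alpha_twisted_sinv[of "fst X" "ubar X"]
  unfolding pinv_def ubar_def abar_def by (simp add: beta_sinv)

lemma abar_pinv: "abar (pinv X) = sinv multS (fst X)"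
  using alpha_twisted_sinv[of "snd X" "abar X"]
  unfolding pinv_def ubar_def abar_def by (simp add: alpha_sinv)

lemma pinv_pmult:
  "pmult (pinv X) X = (multS (sinv multS (abar X)) (abar X), multT (sinv multT (ubar X)) (ubar X))"
  by (simp add: prod_eq_iff fst_pmult snd_pmult ubar_pinv abar_pinv alpha_sinv beta_sinv)
    (simp add: pinv_def abar_def ubar_def)

lemma is_inv_of_pinv: "is_inv_of pmult X (pinv X)"
proof -
  obtain a u where X: "X = (a, u)" by (cases X)
  have "pmult X (pmult (pinv X) X) = X"
    unfolding pinv_pmult
    by (simp add: X pmult_Pair abar_def ubar_def
        flip: S.assoc T.assoc add: S.mult_sinv_mult T.mult_sinv_mult)
  moreover have "pmult (pmult (pinv X) X) (pinv X) = pinv X"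
    unfolding pinv_pmult
    by (subst pmult_idem_Pair)
      (simp_all add: S.idem_sinv_mult T.idem_sinv_mult pinv_def S.sinv_mult_sinv T.sinv_mult_sinv)
  ultimately show ?thesis
    unfolding is_inv_of_def by (simp add: pmult_assoc)
qed

lemma inverse_semigroup_pmult: "inverse_semigroup pmult"
proof -
  interpret semigroup pmult by unfold_locales (rule pmult_assoc)
  show ?thesis by (rule inverse_semigroupI[OF is_inv_of_pinv pmult_idem_commute])
qed

lemma sinv_pmult: "sinv pmult X = pinv X"
proof -
  interpret P: inv_semigroup pmult by unfold_locales (rule inverse_semigroup_pmult)
  show ?thesis
    using is_inv_of_pinv[of X] unfolding is_inv_of_def by (blast intro: P.sinv_eqI)
qed

section \<open>The map associated to the matched product\<close>

abbreviation padd :: "'a \<times> 'b \<Rightarrow> 'a \<times> 'b \<Rightarrow> 'a \<times> 'b" where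
  "padd \<equiv> mp_add addS addT"

lemma padd_Pair: "padd (a, u) (b, v) = (addS a b, addT u v)"
  by (simp add: mp_add_def)

lemma padd_swap: "mp_add addT addS (prod.swap X) (prod.swap Y) = prod.swap (padd X Y)"
  by (cases X; cases Y) (simp add: mp_add_def)

lemma lam_pmult: "lam padd pmult X Y = pmult X (padd (pinv X) Y)"
  unfolding lam_def sinv_pmult ..

lemma rho_pmult: "rho padd pmult Y X = pmult (pinv (padd (pinv X) Y)) Y"
  unfolding rho_def sinv_pmult ..

lemma fst_lam_pmult: "fst (lam padd pmult X Y) = \<alpha> (snd X) (lam addS multS (abar X) (fst Y))"
  unfolding lam_pmult
  by (cases X; cases Y) (simp add: pinv_def padd_Pair pmult_Pair abar_def ubar_def lam_def)

lemma fst_lam_pmult_ubar: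
  "fst (lam padd pmult X Y) = lam addS multS (fst X) (\<alpha> (ubar X) (fst Y))"
  unfolding fst_lam_pmult alpha_lam by (simp add: abar_def ubar_def)

lemma fst_rho_pmult:
  "fst (rho padd pmult Y X) =
   inv (\<alpha> (ubar (lam padd pmult X Y))) (rho addS multS (\<alpha> (ubar X) (fst Y)) (fst X))"
proof -
  define P where "P = padd (pinv X) Y"
  define p where "p = fst P"
  define w where "w = ubar X"
  have "fst (pmult (pinv P) Y) = \<alpha> (snd (pinv P)) (multS (abar (pinv P)) (fst Y))"
    by (cases "pinv P"; cases Y) (simp add: pmult_Pair abar_def)
  then have fst_rho: "fst (rho padd pmult Y X) = inv (\<alpha> (ubar P)) (multS (sinv multS p) (fst Y))"
    unfolding rho_pmult P_def[symmetric] abar_pinv by (simp add: p_def pinv_def alpha_sinv)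
  have p: "p = addS (sinv multS (abar X)) (fst Y)"
    unfolding p_def P_def by (cases Y) (simp add: pinv_def padd_Pair)
  have "rho addS multS (\<alpha> w (fst Y)) (fst X) = multS (sinv multS (\<alpha> w p)) (\<alpha> w (fst Y))"
    using alpha_twisted_sinv[of "snd X" "abar X"]
    unfolding rho_def p alpha_add by (simp add: w_def abar_def ubar_def)
  also have "\<dots> = \<alpha> (twist w p) (multS (sinv multS p) (fst Y))"
    by (rule sinv_alpha_mult)
  finally have rho_S: "rho addS multS (\<alpha> w (fst Y)) (fst X) =
      \<alpha> (twist w p) (multS (sinv multS p) (fst Y))" .
  have "ubar (lam padd pmult X Y) = multT (twist w p) (ubar P)"
    unfolding lam_pmult P_def[symmetric] ubar_pmult w_def p_def ..
  then have "inv (\<alpha> (ubar (lam padd pmult X Y))) = inv (\<alpha> (ubar P)) \<circ> inv (\<alpha> (twist w p))"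
    by (simp add: alpha_mult o_inv_distrib alpha_bij)
  then show ?thesis using fst_rho rho_S w_def by simp
qed

lemma alpha_ubar_pmult_idem:
  assumes e: "multS e e = e" and f: "multT f f = f"
  shows "\<alpha> (ubar (pmult (pmult X (e, f)) Y)) = \<alpha> (ubar (pmult X Y))"
proof -
  define s where "s = \<alpha> (ubar X) (fst Y)"
  have "\<beta> (\<alpha> (ubar X) e) = id"
    using alpha_preserves_idem[OF e] by (rule beta_idem)
  then have ubar_Xe: "ubar (pmult X (e, f)) = multT (ubar X) f"
    unfolding ubar_pmult by (simp add: ubar_def beta_idem[OF e])
  have "\<alpha> (\<beta> (dual.twist (sinv multS s) (ubar X)) f) = id"
    using dual.alpha_preserves_idem[OF f] by (rule alpha_idem)
  then have "\<alpha> (inv (\<beta> s) (multT (ubar X) f)) = \<alpha> (inv (\<beta> s) (ubar X))"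
    using dual.alpha_mult_right[of "sinv multS s" "ubar X" f] by (simp add: alpha_mult beta_sinv)
  moreover have "\<alpha> (multT (ubar X) f) = \<alpha> (ubar X)"
    by (simp add: alpha_mult alpha_idem[OF f])
  ultimately show ?thesis
    unfolding alpha_ubar_pmult ubar_Xe by (simp add: fst_pmult s_def)
qed

lemma alpha_ubar_lam_rho:
  "\<alpha> (ubar (pmult (lam padd pmult X Y) (rho padd pmult Y X))) = \<alpha> (ubar (pmult X Y))"
proof -
  define P where "P = padd (pinv X) Y"
  have "pmult (lam padd pmult X Y) (rho padd pmult Y X) = pmult (pmult X (pmult P (pinv P))) Y"
    unfolding lam_pmult rho_pmult P_def[symmetric] by (simp add: pmult_assoc)
  moreover have "pmult (pmult P (pinv P)) (pmult P (pinv P)) = pmult P (pinv P)"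
    using is_inv_of_pinv[of P] unfolding is_inv_of_def by (metis pmult_assoc)
  ultimately show ?thesis
    using alpha_ubar_pmult_idem idem_pmultD by (metis prod.collapse)
qed

abbreviation rS :: "'a \<times> 'a \<Rightarrow> 'a \<times> 'a" where
  "rS \<equiv> assoc_map addS multS"

abbreviation r_matched :: "('a \<times> 'b) \<times> ('a \<times> 'b) \<Rightarrow> ('a \<times> 'b) \<times> ('a \<times> 'b)" where
  "r_matched \<equiv> assoc_map padd pmult"

definition proj3 :: "('a \<times> 'b) \<times> ('a \<times> 'b) \<times> ('a \<times> 'b) \<Rightarrow> 'a \<times> 'a \<times> 'a" where
  "proj3 = (\<lambda>(X, Y, Z). (fst X, \<alpha> (ubar X) (fst Y), \<alpha> (ubar (pmult X Y)) (fst Z)))"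

lemma proj3_r12:
  "proj3 (r12 r_matched t) = r12 rS (proj3 t)"
  by (cases t) (simp add: r12_def proj3_def assoc_map_def alpha_ubar_lam_rho fst_lam_pmult_ubar fst_rho_pmult)

lemma proj3_r23:
  "proj3 (r23 r_matched t) = r23 rS (proj3 t)"
proof -
  obtain X Y Z where t: "t = (X, Y, Z)" by (cases t)
  define w where "w = ubar X"
  have "\<alpha> w (fst (lam padd pmult Y Z))
      = lam addS multS (\<alpha> w (fst Y)) (\<alpha> (ubar (pmult X Y)) (fst Z))"
    unfolding fst_lam_pmult_ubar alpha_lam alpha_ubar_pmult by (simp add: w_def)
  moreover have "\<alpha> (ubar (pmult X (lam padd pmult Y Z))) (fst (rho padd pmult Z Y))
      = rho addS multS (\<alpha> (ubar (pmult X Y)) (fst Z)) (\<alpha> w (fst Y))"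
    by (simp add: fst_rho_pmult alpha_ubar_pmult fst_lam_pmult_ubar rho_alpha w_def)
  ultimately show ?thesis
    unfolding t r23_def proj3_def assoc_map_def by (simp add: w_def)
qed

lemma proj3_braid:
  assumes "is_solution rS"
  shows "proj3 ((r12 r_matched \<circ> r23 r_matched \<circ> r12 r_matched) t)
       = proj3 ((r23 r_matched \<circ> r12 r_matched \<circ> r23 r_matched) t)"
  using fun_cong[OF assms[unfolded is_solution_def], of "proj3 t"] by (simp add: proj3_r12 proj3_r23)

end

definition swap3 :: "('a \<times> 'b) \<times> ('a \<times> 'b) \<times> ('a \<times> 'b) \<Rightarrow> ('b \<times> 'a) \<times> ('b \<times> 'a) \<times> ('b \<times> 'a)" where
  "swap3 = (\<lambda>(X, Y, Z). (prod.swap X, prod.swap Y, prod.swap Z))"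

context matched_system
begin


lemma sinv_pmult_swap: "sinv dual.pmult (prod.swap X) = prod.swap (sinv pmult X)"
  by (simp add: sinv_pmult dual.sinv_pmult pinv_def dual.pinv_def dual_ubar_swap)
    (simp add: abar_def ubar_def dual.abar_def)

lemma lam_swap: "lam dual.padd dual.pmult (prod.swap X) (prod.swap Y) = prod.swap (lam padd pmult X Y)"
  unfolding lam_def sinv_pmult_swap padd_swap pmult_swap ..

lemma rho_swap: "rho dual.padd dual.pmult (prod.swap Y) (prod.swap X) = prod.swap (rho padd pmult Y X)"
  unfolding rho_def sinv_pmult_swap padd_swap pmult_swap ..

lemma r_matched_swap:
  "dual.r_matched (prod.swap X, prod.swap Y) = map_prod prod.swap prod.swap (r_matched (X, Y))"
  unfolding assoc_map_def by (simp add: lam_swap rho_swap)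

lemma r12_swap3: "r12 dual.r_matched (swap3 t) = swap3 (r12 r_matched t)"
  and r23_swap3: "r23 dual.r_matched (swap3 t) = swap3 (r23 r_matched t)"
proof -
  obtain X Y Z where t: "t = (X, Y, Z)" by (cases t)
  show "r12 dual.r_matched (swap3 t) = swap3 (r12 r_matched t)"
    and "r23 dual.r_matched (swap3 t) = swap3 (r23 r_matched t)"
    by (simp_all add: t swap3_def r12_def r23_def r_matched_swap split: prod.split)
qed

lemma dual_proj3_swap3:
  "dual.proj3 (swap3 (X, Y, Z)) = (snd X, \<beta> (abar X) (snd Y), \<beta> (abar (pmult X Y)) (snd Z))"
  by (simp add: dual.proj3_def swap3_def dual_ubar_swap pmult_swap)

lemma proj3_dual_proj3_inj:
  assumes "proj3 t = proj3 t'" and "dual.proj3 (swap3 t) = dual.proj3 (swap3 t')"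
  shows "t = t'"
proof -
  obtain X Y Z X' Y' Z' where t: "t = (X, Y, Z)" and t': "t' = (X', Y', Z')"
    by (cases t; cases t')
  have S_eqs: "fst X = fst X'" "\<alpha> (ubar X) (fst Y) = \<alpha> (ubar X') (fst Y')"
      "\<alpha> (ubar (pmult X Y)) (fst Z) = \<alpha> (ubar (pmult X' Y')) (fst Z')"
    using assms(1) by (simp_all add: t t' proj3_def)
  have T_eqs: "snd X = snd X'" "\<beta> (abar X) (snd Y) = \<beta> (abar X') (snd Y')"
      "\<beta> (abar (pmult X Y)) (snd Z) = \<beta> (abar (pmult X' Y')) (snd Z')"
    using assms(2) by (simp_all add: t t' dual_proj3_swap3)
  have X: "X = X'" using S_eqs(1) T_eqs(1) by (simp add: prod_eq_iff)
  have Y: "Y = Y'" using S_eqs(2) T_eqs(2) X by (simp add: prod_eq_iff alpha_eq_iff beta_eq_iff)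
  have "Z = Z'" using S_eqs(3) T_eqs(3) X Y by (simp add: prod_eq_iff alpha_eq_iff beta_eq_iff)
  with X Y show ?thesis by (simp add: t t')
qed

lemma is_solution_r_matched:
  assumes "is_solution rS" and "is_solution dual.rS"
  shows "is_solution r_matched"
  unfolding is_solution_def
proof
  fix t
  have "dual.proj3 (swap3 ((r12 r_matched \<circ> r23 r_matched \<circ> r12 r_matched) t))
      = dual.proj3 ((r12 dual.r_matched \<circ> r23 dual.r_matched \<circ> r12 dual.r_matched) (swap3 t))"
    by (simp add: r12_swap3 r23_swap3)
  also have "\<dots> = dual.proj3 ((r23 dual.r_matched \<circ> r12 dual.r_matched \<circ> r23 dual.r_matched) (swap3 t))"
    by (rule dual.proj3_braid[OF assms(2)])
  also have "\<dots> = dual.proj3 (swap3 ((r23 r_matched \<circ> r12 r_matched \<circ> r23 r_matched) t))"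
    by (simp add: r12_swap3 r23_swap3)
  finally show "(r12 r_matched \<circ> r23 r_matched \<circ> r12 r_matched) t
      = (r23 r_matched \<circ> r12 r_matched \<circ> r23 r_matched) t"
    using proj3_dual_proj3_inj proj3_braid[OF assms(1)] by blast
qed

lemma snd_lam_pmult: "snd (lam padd pmult X Y) = \<beta> (fst X) (lam addT multT (ubar X) (snd Y))"
  using dual.fst_lam_pmult[of "prod.swap X" "prod.swap Y"]
  by (simp add: lam_swap dual.abar_def ubar_def)

lemma snd_rho_pmult:
  "snd (rho padd pmult Y X) =
   inv (\<beta> (abar (lam padd pmult X Y))) (rho addT multT (\<beta> (abar X) (snd Y)) (snd X))"
  using dual.fst_rho_pmult[of "prod.swap Y" "prod.swap X"]
  by (simp add: lam_swap rho_swap dual_ubar_swap)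

lemma r_matched_Pair:
  "let a' = inv (\<alpha> u) a; u' = inv (\<beta> a) u;
       A = \<alpha> u (lam addS multS a' b); U = \<beta> a (lam addT multT u' v);
       A' = inv (\<alpha> U) A; U' = inv (\<beta> A) U
   in r_matched ((a, u), (b, v)) =
      ((A, U), (inv (\<alpha> U') (rho addS multS (\<alpha> u' b) a),
                inv (\<beta> A') (rho addT multT (\<beta> a' v) u)))"
proof -
  define L where "L = lam padd pmult (a, u) (b, v)"
  have "fst L = \<alpha> u (lam addS multS (inv (\<alpha> u) a) b)"
    and "snd L = \<beta> a (lam addT multT (inv (\<beta> a) u) v)"
    unfolding L_def fst_lam_pmult snd_lam_pmult by (simp_all add: abar_def ubar_def)
  then show ?thesis
    using fst_rho_pmult[of "(b, v)" "(a, u)"] snd_rho_pmult[of "(b, v)" "(a, u)"]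
    by (simp add: assoc_map_def Let_def prod_eq_iff abar_def ubar_def flip: L_def)
qed

end

theorem theorem28:
  fixes addS multS :: "'a \<Rightarrow> 'a \<Rightarrow> 'a" and addT multT :: "'b \<Rightarrow> 'b \<Rightarrow> 'b"
    and \<alpha> :: "'b \<Rightarrow> 'a \<Rightarrow> 'a" and \<beta> :: "'a \<Rightarrow> 'b \<Rightarrow> 'b"
  assumes "matched_product_system addS multS addT multT \<alpha> \<beta>"
    and "is_solution (assoc_map addS multS)"
    and "is_solution (assoc_map addT multT)"
  shows "is_solution (assoc_map (mp_add addS addT) (mp_mult multS multT \<alpha> \<beta>))
    \<and> (\<forall>a u b v.
        let abar = inv (\<alpha> u) a; ubar = inv (\<beta> a) u;
            A = \<alpha> u (lam addS multS abar b); U = \<beta> a (lam addT multT ubar v);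
            Abar = inv (\<alpha> U) A; Ubar = inv (\<beta> A) U
        in assoc_map (mp_add addS addT) (mp_mult multS multT \<alpha> \<beta>) ((a, u), (b, v)) =
           ((A, U),
            (inv (\<alpha> Ubar) (rho addS multS (\<alpha> ubar b) a),
             inv (\<beta> Abar) (rho addT multT (\<beta> abar v) u))))"
proof -
  interpret matched_system addS multS addT multT \<alpha> \<beta>
    by unfold_locales (rule assms(1))
  show ?thesis
    using is_solution_r_matched[OF assms(2,3)] r_matched_Pair by blast
qed

end
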